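(* Let $A=\mathrm{Diag}(a_1,a_2,a_3,a_4)$, $B=\mathrm{Diag}(b_1,b_2,b_3,b_4)$, $C=\mathrm{Diag}(c_1,c_2,c_3,c_4)$ be traceless real diagonal matrices. Then for the $G_2$-structure $(G_{A,B,C},\varphi)$, with $\psi=*\varphi$, $$\Delta\varphi=\big((a_1+a_2)^2+(b_1+b_2)^2+(c_1+c_2)^2\big)\omega_7\wedge e^7+\big((a_1+a_3)^2+(b_1+b_3)^2+(c_1+c_3)^2\big)\omega_1\wedge e^1+\big((a_1+a_4)^2+(b_1+b_4)^2+(c_1+c_4)^2\big)\omega_2\wedge e^2,$$ $$\Delta\psi=\big((a_1+a_2)^2+(b_1+b_2)^2+(c_1+c_2)^2\big)\omega_7\wedge e^{12}+\big((a_1+a_3)^2+(b_1+b_3)^2+(c_1+c_3)^2\big)\omega_1\wedge e^{27}-\big((a_1+a_4)^2+(b_1+b_4)^2+(c_1+c_4)^2\big)\omega_2\wedge e^{17}.$$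
   Context: For commuting $A,B,C\in\mathfrak{sl}_4(\mathbb R)$, $\mathfrak g_{A,B,C}$ is the Lie algebra with basis $\{e_1,\dots,e_7\}$ in which $\langle e_7,e_1,e_2\rangle$ is an abelian subalgebra, $\mathfrak n=\langle e_3,\dots,e_6\rangle$ is an abelian ideal, and in the basis $\{e_3,\dots,e_6\}$, $\mathrm{ad}\,e_7|_{\mathfrak n}=A$, $\mathrm{ad}\,e_1|_{\mathfrak n}=B$, $\mathrm{ad}\,e_2|_{\mathfrak n}=C$; $G_{A,B,C}$ is the simply connected Lie group with this Lie algebra, with left-invariant positive 3-form $\varphi=e^{127}+e^{347}+e^{567}+e^{135}-e^{146}-e^{236}-e^{245}$ ($\{e^i\}$ dual basis, $e^{ij}=e^i\wedge e^j$). The induced metric makes $\{e_1,\dots,e_7\}$ oriented orthonormal; $*$ is its Hodge star and $\Delta=dd^*+d^*d$ the Hodge Laplacian on left-invariant forms. Also $\omega_7=e^{34}+e^{56}$, $\omega_1=e^{35}-e^{46}$, $\omega_2=-e^{36}-e^{45}$. *)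

theory Defs
  imports Complex_Main
begin

text \<open>Left-invariant forms on a 7-dimensional Lie group with basis e_1..e_7.
A (mixed-degree) form is a coefficient function on index sets: the form
alpha = sum over I of alpha(I) e^I, where for I = {i_1 < ... < i_k} we write
e^I = e^{i_1} wedge ... wedge e^{i_k}.  Only subsets of {1..7} are relevant;
all operations below vanish outside of them.\<close>

type_synonym form = "nat set \<Rightarrow> real"

definition idx :: "nat set" where "idx = {1..7}"

definition ef :: "nat \<Rightarrow> form" where
  "ef i = (\<lambda>J. if J = {i} then 1 else 0)"

text \<open>Sign of e^I wedge e^J = msgn I J * e^(I union J) for disjoint I, J.\<close>
definition msgn :: "nat set \<Rightarrow> nat set \<Rightarrow> real" where
  "msgn I J = (-1) ^ card {(i, j). i \<in> I \<and> j \<in> J \<and> j < i}"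

definition wedge :: "form \<Rightarrow> form \<Rightarrow> form" (infixr "\<and>\<^sub>f" 70) where
  "wedge \<alpha> \<beta> = (\<lambda>K. if K \<subseteq> idx then (\<Sum>I\<in>Pow K. \<alpha> I * \<beta> (K - I) * msgn I (K - I)) else 0)"

definition fadd :: "form \<Rightarrow> form \<Rightarrow> form" (infixl "+\<^sub>f" 65) where
  "fadd \<alpha> \<beta> = (\<lambda>K. \<alpha> K + \<beta> K)"

definition fsub :: "form \<Rightarrow> form \<Rightarrow> form" (infixl "-\<^sub>f" 65) where
  "fsub \<alpha> \<beta> = (\<lambda>K. \<alpha> K - \<beta> K)"

definition fscale :: "real \<Rightarrow> form \<Rightarrow> form" (infixr "*\<^sub>f" 75) where
  "fscale c \<alpha> = (\<lambda>K. c * \<alpha> K)"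

text \<open>Number of inversions of a list (its parity is the sign of the sorting permutation).\<close>
definition inversions :: "nat list \<Rightarrow> nat" where
  "inversions xs = card {(i, j). i < j \<and> j < length xs \<and> xs ! j < xs ! i}"

text \<open>Value of a form on the tuple of basis vectors (e_{x_1}, ..., e_{x_k}).\<close>
definition ev :: "form \<Rightarrow> nat list \<Rightarrow> real" where
  "ev \<alpha> xs = (if distinct xs then (-1) ^ inversions xs * \<alpha> (set xs) else 0)"

text \<open>A Lie bracket given by structure constants: br i j m is the e_m-coefficient
of [e_i, e_j].  The exterior derivative of a left-invariant form is
d alpha(X_0,...,X_k) = sum_{i<j} (-1)^(i+j) alpha([X_i,X_j], X_0, .., X_i^, .., X_j^, .., X_k).\<close>
definition dext :: "(nat \<Rightarrow> nat \<Rightarrow> nat \<Rightarrow> real) \<Rightarrow> form \<Rightarrow> form" where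
  "dext br \<alpha> = (\<lambda>K. if K \<subseteq> idx then
      (let ks = sorted_list_of_set K; p = length ks in
        \<Sum>i<p. \<Sum>j<p. if i < j then
          (-1) ^ (i + j) * (\<Sum>m\<in>idx. br (ks ! i) (ks ! j) m *
              ev \<alpha> (m # [ks ! l. l \<leftarrow> [0..<p], l \<noteq> i \<and> l \<noteq> j]))
        else 0)
     else 0)"

text \<open>Hodge star of the metric making e_1..e_7 an oriented orthonormal basis:
*e^I = msgn I I^c e^(I^c), so that e^I wedge *e^I = e^{1234567}.\<close>
definition hstar :: "form \<Rightarrow> form" where
  "hstar \<alpha> = (\<lambda>J. if J \<subseteq> idx then \<alpha> (idx - J) * msgn (idx - J) J else 0)"

text \<open>Codifferential on k-forms in dimension 7: d^* = (-1)^(7(k+1)+1) * d * = (-1)^k * d *.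
Its value on an index set J of size k-1 only involves the degree-k part of alpha.\<close>
definition codiff :: "(nat \<Rightarrow> nat \<Rightarrow> nat \<Rightarrow> real) \<Rightarrow> form \<Rightarrow> form" where
  "codiff br \<alpha> = (\<lambda>J. (-1) ^ (card J + 1) * hstar (dext br (hstar \<alpha>)) J)"

definition hodge_lap :: "(nat \<Rightarrow> nat \<Rightarrow> nat \<Rightarrow> real) \<Rightarrow> form \<Rightarrow> form" where
  "hodge_lap br \<alpha> = dext br (codiff br \<alpha>) +\<^sub>f codiff br (dext br \<alpha>)"

text \<open>Structure constants of g_{A,B,C}: matrices are functions M r s (row r, column s,
indices 1..4) w.r.t. the basis e_3..e_6 of n; ad e_7|n = A, ad e_1|n = B, ad e_2|n = C;
<e_7,e_1,e_2> abelian, n abelian.\<close>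
definition admat :: "(nat \<Rightarrow> nat \<Rightarrow> real) \<Rightarrow> (nat \<Rightarrow> nat \<Rightarrow> real) \<Rightarrow> (nat \<Rightarrow> nat \<Rightarrow> real)
    \<Rightarrow> nat \<Rightarrow> nat \<Rightarrow> nat \<Rightarrow> real" where
  "admat A B C x = (if x = 7 then A else if x = 1 then B else if x = 2 then C else (\<lambda>_ _. 0))"

definition gbr :: "(nat \<Rightarrow> nat \<Rightarrow> real) \<Rightarrow> (nat \<Rightarrow> nat \<Rightarrow> real) \<Rightarrow> (nat \<Rightarrow> nat \<Rightarrow> real)
    \<Rightarrow> nat \<Rightarrow> nat \<Rightarrow> nat \<Rightarrow> real" where
  "gbr A B C i j m =
     (if m \<in> {3..6} then
        (if i \<in> {7,1,2} \<and> j \<in> {3..6} then admat A B C i (m - 2) (j - 2)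
         else if j \<in> {7,1,2} \<and> i \<in> {3..6} then - admat A B C j (m - 2) (i - 2)
         else 0)
      else 0)"

definition diagm :: "(nat \<Rightarrow> real) \<Rightarrow> nat \<Rightarrow> nat \<Rightarrow> real" where
  "diagm a = (\<lambda>r s. if r = s then a r else 0)"

definition phi :: form where
  "phi = (ef 1 \<and>\<^sub>f ef 2 \<and>\<^sub>f ef 7) +\<^sub>f (ef 3 \<and>\<^sub>f ef 4 \<and>\<^sub>f ef 7) +\<^sub>f (ef 5 \<and>\<^sub>f ef 6 \<and>\<^sub>f ef 7)
     +\<^sub>f (ef 1 \<and>\<^sub>f ef 3 \<and>\<^sub>f ef 5) -\<^sub>f (ef 1 \<and>\<^sub>f ef 4 \<and>\<^sub>f ef 6) -\<^sub>f (ef 2 \<and>\<^sub>f ef 3 \<and>\<^sub>f ef 6)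
     -\<^sub>f (ef 2 \<and>\<^sub>f ef 4 \<and>\<^sub>f ef 5)"

definition omega7 :: form where "omega7 = (ef 3 \<and>\<^sub>f ef 4) +\<^sub>f (ef 5 \<and>\<^sub>f ef 6)"
definition omega1 :: form where "omega1 = (ef 3 \<and>\<^sub>f ef 5) -\<^sub>f (ef 4 \<and>\<^sub>f ef 6)"
definition omega2 :: form where "omega2 = ((-1) *\<^sub>f (ef 3 \<and>\<^sub>f ef 6)) -\<^sub>f (ef 4 \<and>\<^sub>f ef 5)"

end

theory Submission
  imports Defs
begin

text \<open>
  The Hodge star squares to the identity in dimension 7, and it intertwines d and
  d^* = (-1)^k * d * up to signs that depend only on the degree.  Hence the Laplacian commutes
  with *, whatever the structure constants, and Delta psi = * Delta phi.  What remains is a finite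
  computation: for diagonal A, B, C every bracket [e_i, e_j] is a multiple of a single basis
  vector, so d phi and d psi have few terms, and Delta phi = d d^* phi + d^* d phi is obtained
  from them by evaluating both sides on every index set.  The trace conditions remove the
  components of d^* phi along e^12, e^17, e^27 and turn the coefficients into the stated sums
  of squares.
\<close>

section \<open>The Hodge star commutes with the Laplacian\<close>

definition supported :: "form \<Rightarrow> bool" where
  "supported \<alpha> \<longleftrightarrow> (\<forall>K. \<not> K \<subseteq> idx \<longrightarrow> \<alpha> K = 0)"

lemma finite_idx [simp]: "finite idx"
  by (simp add: idx_def)

lemma card_idx [simp]: "card idx = 7"
  by (simp add: idx_def)

lemma card_subset_idx_le: "J \<subseteq> idx \<Longrightarrow> card J \<le> 7"
  using card_mono[OF finite_idx] by fastforce

lemma card_idx_Diff: "J \<subseteq> idx \<Longrightarrow> card (idx - J) = 7 - card J"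
  by (simp add: card_Diff_subset finite_subset)

lemma dext_eq_0_if_not_subset: "\<not> K \<subseteq> idx \<Longrightarrow> dext br \<alpha> K = 0"
  by (simp add: dext_def)

lemma supported_dext: "supported (dext br \<alpha>)"
  by (simp add: supported_def dext_def)

lemma supported_hstar: "supported (hstar \<alpha>)"
  by (simp add: supported_def hstar_def)

lemma msgn_mult_swap:
  assumes "finite I" "finite J" "I \<inter> J = {}"
  shows "msgn I J * msgn J I = (-1) ^ (card I * card J)"
proof -
  let ?A = "{(i, j). i \<in> I \<and> j \<in> J \<and> j < i}"
  let ?B = "{(i, j). i \<in> I \<and> j \<in> J \<and> i < j}"
  have "{(j, i). j \<in> J \<and> i \<in> I \<and> i < j} = ?B\<inverse>"
    by auto
  then have swap: "card {(j, i). j \<in> J \<and> i \<in> I \<and> i < j} = card ?B"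
    by (simp only: card_inverse)
  have "?A \<union> ?B = I \<times> J"
    using assms(3) by (auto simp: disjoint_iff not_less_iff_gr_or_eq)
  then have "card I * card J = card (?A \<union> ?B)"
    by (simp only: card_cartesian_product)
  also have "\<dots> = card ?A + card ?B"
    using finite_cartesian_product[OF assms(1,2)]
    by (intro card_Un_disjoint) (auto simp: finite_subset[of _ "I \<times> J"] subset_iff)
  finally show ?thesis
    by (simp add: msgn_def swap power_add[symmetric])
qed

lemma hstar_hstar: "supported \<alpha> \<Longrightarrow> hstar (hstar \<alpha>) = \<alpha>"
proof
  fix J
  assume "supported \<alpha>"
  show "hstar (hstar \<alpha>) J = \<alpha> J"
  proof (cases "J \<subseteq> idx")
    case True
    have "even (card J * (7 - card J))"
      by (cases "even (card J)") (auto simp: card_subset_idx_le[OF True])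
    moreover have "idx - (idx - J) = J"
      using True by auto
    ultimately show ?thesis
      using True msgn_mult_swap[of J "idx - J"] finite_subset[OF True]
      by (simp add: hstar_def card_idx_Diff mult.assoc)
  qed (use \<open>supported \<alpha>\<close> in \<open>simp add: hstar_def supported_def\<close>)
qed

lemma hstar_fadd: "hstar (\<alpha> +\<^sub>f \<beta>) = hstar \<alpha> +\<^sub>f hstar \<beta>"
  by (auto simp: hstar_def fadd_def algebra_simps)

lemma neg_one_power_complement:
  "c \<le> 7 \<Longrightarrow> (-1 :: real) ^ (7 - c + n) = (-1) ^ (c + Suc n)"
proof -
  assume "c \<le> 7"
  then have "even (7 - c + n) \<longleftrightarrow> even (c + Suc n)"
    by presburger
  then show ?thesis
    by (simp add: minus_one_power_iff)
qed

text \<open>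
  The degree signs are written (-1) ^ (card K + n) and (-1) ^ (card K + Suc n), not n + 1,
  so that the right-hand side of one sign rule matches the left-hand side of the next.
\<close>

lemma hstar_degree_sign:
  "hstar (\<lambda>K. (-1) ^ (card K + n) * \<alpha> K) = (\<lambda>J. (-1) ^ (card J + Suc n) * hstar \<alpha> J)"
proof
  fix J
  show "hstar (\<lambda>K. (-1) ^ (card K + n) * \<alpha> K) J = (-1) ^ (card J + Suc n) * hstar \<alpha> J"
  proof (cases "J \<subseteq> idx")
    case True
    then have "(-1 :: real) ^ (card (idx - J) + n) = (-1) ^ (card J + Suc n)"
      by (simp only: card_idx_Diff neg_one_power_complement card_subset_idx_le)
    then show ?thesis
      using True by (simp add: hstar_def)
  qed (simp add: hstar_def)
qed

lemma ev_degree_sign: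
  "ev (\<lambda>K. (-1) ^ (card K + n) * \<alpha> K) xs = (-1) ^ (length xs + n) * ev \<alpha> xs"
  by (simp add: ev_def distinct_card)

lemma length_upt_without_two:
  assumes "i < j" "j < p"
  shows "length [f l. l \<leftarrow> [0..<p], l \<noteq> i \<and> l \<noteq> j] = p - 2"
proof -
  have "length [f l. l \<leftarrow> [0..<q], l \<noteq> i \<and> l \<noteq> j] = card ({..<q} - {i, j})" for q
    by (induction q) (auto simp: lessThan_Suc insert_Diff_if)
  then show ?thesis
    using assms by (simp add: card_Diff_subset)
qed

lemma ev_degree_sign_without_two:
  assumes "i < j" "j < p"
  shows "ev (\<lambda>K. (-1) ^ (card K + n) * \<alpha> K) (m # [f l. l \<leftarrow> [0..<p], l \<noteq> i \<and> l \<noteq> j])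
    = (-1) ^ (p + Suc n) * ev \<alpha> (m # [f l. l \<leftarrow> [0..<p], l \<noteq> i \<and> l \<noteq> j])"
proof -
  let ?xs = "m # [f l. l \<leftarrow> [0..<p], l \<noteq> i \<and> l \<noteq> j]"
  have len: "length ?xs + n + 2 = p + Suc n"
    using length_upt_without_two[OF assms, of f] assms by simp
  have "(-1 :: real) ^ (length ?xs + n) = (-1) ^ (length ?xs + n + 2)"
    by simp
  also have "\<dots> = (-1) ^ (p + Suc n)"
    by (simp only: len)
  finally show ?thesis
    by (simp only: ev_degree_sign)
qed

lemma dext_degree_sign:
  "dext br (\<lambda>K. (-1) ^ (card K + n) * \<alpha> K) = (\<lambda>K. (-1) ^ (card K + Suc n) * dext br \<alpha> K)"
proof
  fix K :: "nat set"
  let ?ks = "sorted_list_of_set K"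
  let ?p = "card K"
  let ?rest = "\<lambda>i j. [?ks ! l. l \<leftarrow> [0..<?p], l \<noteq> i \<and> l \<noteq> j]"
  let ?S = "\<lambda>\<beta>. \<Sum>i<?p. \<Sum>j<?p. if i < j then (-1) ^ (i + j) *
      (\<Sum>m\<in>idx. br (?ks ! i) (?ks ! j) m * ev \<beta> (m # ?rest i j)) else 0"
  have inner: "(\<Sum>m\<in>idx. br (?ks ! i) (?ks ! j) m * ev (\<lambda>K. (-1) ^ (card K + n) * \<alpha> K) (m # ?rest i j))
      = (-1) ^ (?p + Suc n) * (\<Sum>m\<in>idx. br (?ks ! i) (?ks ! j) m * ev \<alpha> (m # ?rest i j))"
    if "i < j" "j < ?p" for i j
    by (simp only: ev_degree_sign_without_two[OF that]) (simp add: sum_distrib_left mult.left_commute)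
  have "?S (\<lambda>K. (-1) ^ (card K + n) * \<alpha> K) = (\<Sum>i<?p. \<Sum>j<?p. (-1) ^ (?p + Suc n) *
      (if i < j then (-1) ^ (i + j) * (\<Sum>m\<in>idx. br (?ks ! i) (?ks ! j) m * ev \<alpha> (m # ?rest i j))
       else 0))"
    by (intro sum.cong refl) (simp add: inner)
  also have "\<dots> = (-1) ^ (?p + Suc n) * ?S \<alpha>"
    by (simp only: sum_distrib_left)
  finally have scale: "?S (\<lambda>K. (-1) ^ (card K + n) * \<alpha> K) = (-1) ^ (?p + Suc n) * ?S \<alpha>" .
  have dext_eq: "dext br \<beta> K = ?S \<beta>" if "K \<subseteq> idx" for \<beta>
    using that unfolding dext_def Let_def length_sorted_list_of_set by simp
  show "dext br (\<lambda>K. (-1) ^ (card K + n) * \<alpha> K) K = (-1) ^ (card K + Suc n) * dext br \<alpha> K"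
  proof (cases "K \<subseteq> idx")
    case True
    then show ?thesis
      using scale by (simp only: dext_eq)
  qed (simp add: dext_eq_0_if_not_subset)
qed

lemma hodge_lap_hstar:
  assumes "supported \<alpha>"
  shows "hodge_lap br (hstar \<alpha>) = hstar (hodge_lap br \<alpha>)"
proof -
  have "dext br (codiff br (hstar \<alpha>)) = hstar (codiff br (dext br \<alpha>))"
    unfolding codiff_def dext_degree_sign hstar_degree_sign
    by (simp add: hstar_hstar assms supported_dext)
  moreover have "codiff br (dext br (hstar \<alpha>)) = hstar (dext br (codiff br \<alpha>))"
    unfolding codiff_def dext_degree_sign hstar_degree_sign by simp
  ultimately show ?thesis
    unfolding hodge_lap_def hstar_fadd by (auto simp: fadd_def)
qed

section \<open>Evaluating forms on index sets\<close>

definition basis :: "nat set \<Rightarrow> form" where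
  "basis S = (\<lambda>K. if K = S then 1 else 0)"

text \<open>
  Equality of concrete index sets is decided through their membership vectors, which keeps
  the evaluation of forms by the simplifier fast.
\<close>

definition membership :: "nat set \<Rightarrow> bool list" where
  "membership K = map (\<lambda>i. i \<in> K) [1, 2, 3, 4, 5, 6, 7]"

lemma idx_eq: "idx = {1, 2, 3, 4, 5, 6, 7}"
  by (auto simp: idx_def)

lemma eq_iff_membership:
  assumes "K \<subseteq> idx" "S \<subseteq> idx"
  shows "K = S \<longleftrightarrow> membership K = membership S"
proof
  assume "membership K = membership S"
  then have "\<forall>i\<in>idx. i \<in> K \<longleftrightarrow> i \<in> S"
    by (simp add: membership_def idx_eq)
  then show "K = S"
    using assms by blast
qed simp

lemma basis_eval:
  "S \<subseteq> idx \<Longrightarrow> basis S K = (if K \<subseteq> idx \<and> membership K = membership S then 1 else 0)"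
  unfolding basis_def using eq_iff_membership by auto

lemma ef_eq_basis: "ef i = basis {i}"
  by (simp add: ef_def basis_def)

lemma supported_basis: "S \<subseteq> idx \<Longrightarrow> supported (basis S)"
  by (auto simp: supported_def basis_def)

lemma supported_fadd: "supported \<alpha> \<Longrightarrow> supported \<beta> \<Longrightarrow> supported (\<alpha> +\<^sub>f \<beta>)"
  by (simp add: supported_def fadd_def)

lemma supported_fsub: "supported \<alpha> \<Longrightarrow> supported \<beta> \<Longrightarrow> supported (\<alpha> -\<^sub>f \<beta>)"
  by (simp add: supported_def fsub_def)

lemma supported_fscale: "supported \<alpha> \<Longrightarrow> supported (x *\<^sub>f \<alpha>)"
  by (simp add: supported_def fscale_def)

lemma supported_codiff: "supported (codiff br \<alpha>)"
  by (simp add: supported_def codiff_def hstar_def)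

lemma supported_hodge_lap: "supported (hodge_lap br \<alpha>)"
  by (simp add: hodge_lap_def supported_fadd supported_dext supported_codiff)

lemmas supported_intros = supported_basis supported_fadd supported_fsub supported_fscale
  supported_dext supported_hstar supported_hodge_lap

lemma form_eq_by_subsets:
  assumes "supported F" "supported G"
    and "\<forall>ks\<in>set (subseqs [1, 2, 3, 4, 5, 6, 7]). F (set ks) = G (set ks)"
  shows "F = G"
proof
  fix K
  show "F K = G K"
  proof (cases "K \<subseteq> idx")
    case True
    then have "K \<in> set ` set (subseqs [1, 2, 3, 4, 5, 6, 7])"
      by (intro subset_subseqs) (simp only: idx_eq list.set)
    then show ?thesis
      using assms(3) by blast
  qed (use assms(1,2) in \<open>simp add: supported_def\<close>)
qed

lemma wedge_basis:
  assumes "S \<subseteq> idx" "T \<subseteq> idx"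
  shows "basis S \<and>\<^sub>f basis T = (if S \<inter> T = {} then msgn S T else 0) *\<^sub>f basis (S \<union> T)"
proof
  fix K
  show "(basis S \<and>\<^sub>f basis T) K = ((if S \<inter> T = {} then msgn S T else 0) *\<^sub>f basis (S \<union> T)) K"
  proof (cases "K \<subseteq> idx")
    case True
    have "(\<Sum>I\<in>Pow K. basis S I * basis T (K - I) * msgn I (K - I))
        = (\<Sum>I\<in>Pow K. if I = S then basis T (K - S) * msgn S (K - S) else 0)"
      by (rule sum.cong) (auto simp: basis_def)
    also have "\<dots> = (if S \<subseteq> K then basis T (K - S) * msgn S (K - S) else 0)"
      using finite_subset[OF True] by (simp add: sum.delta)
    also have "\<dots> = ((if S \<inter> T = {} then msgn S T else 0) *\<^sub>f basis (S \<union> T)) K"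
    proof (cases "S \<inter> T = {} \<and> K = S \<union> T")
      case True
      then have "K - S = T"
        by auto
      with True show ?thesis
        by (auto simp: fscale_def basis_def)
    next
      case False
      then have "\<not> (S \<subseteq> K \<and> K - S = T)"
        by auto
      with False show ?thesis
        by (auto simp: fscale_def basis_def)
    qed
    finally show ?thesis
      using True by (simp add: wedge_def)
  next
    case False
    then have "K \<noteq> S \<union> T"
      using assms by auto
    with False show ?thesis
      by (simp add: wedge_def fscale_def basis_def)
  qed
qed

lemma wedge_fadd_left: "(\<alpha> +\<^sub>f \<beta>) \<and>\<^sub>f \<gamma> = (\<alpha> \<and>\<^sub>f \<gamma>) +\<^sub>f (\<beta> \<and>\<^sub>f \<gamma>)"
  unfolding wedge_def fadd_def by (auto simp: sum.distrib algebra_simps)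

lemma wedge_fsub_left: "(\<alpha> -\<^sub>f \<beta>) \<and>\<^sub>f \<gamma> = (\<alpha> \<and>\<^sub>f \<gamma>) -\<^sub>f (\<beta> \<and>\<^sub>f \<gamma>)"
  unfolding wedge_def fsub_def by (auto simp: sum_subtractf algebra_simps)

lemma wedge_fscale_left: "(x *\<^sub>f \<alpha>) \<and>\<^sub>f \<gamma> = x *\<^sub>f (\<alpha> \<and>\<^sub>f \<gamma>)"
  unfolding wedge_def fscale_def by (auto simp: sum_distrib_left algebra_simps)

lemma wedge_fscale_right: "\<alpha> \<and>\<^sub>f (x *\<^sub>f \<gamma>) = x *\<^sub>f (\<alpha> \<and>\<^sub>f \<gamma>)"
  unfolding wedge_def fscale_def by (auto simp: sum_distrib_left algebra_simps)

lemmas wedge_simps = ef_eq_basis wedge_basis wedge_fadd_left wedge_fsub_left wedge_fscale_left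
  wedge_fscale_right

lemma msgn_eq_sum:
  assumes "finite I" "finite J"
  shows "msgn I J = (-1) ^ (\<Sum>x\<in>I. \<Sum>y\<in>J. if y < x then 1 else 0)"
proof -
  have "card {(i, j). i \<in> I \<and> j \<in> J \<and> j < i} = card (SIGMA i:I. {j\<in>J. j < i})"
    by (rule arg_cong[where f = card]) auto
  also have "\<dots> = (\<Sum>i\<in>I. card {j\<in>J. j < i})"
    using assms by (intro card_SigmaI) auto
  also have "\<dots> = (\<Sum>x\<in>I. \<Sum>y\<in>J. if y < x then 1 else 0)"
  proof (rule sum.cong)
    show "card {j \<in> J. j < x} = (\<Sum>y\<in>J. if y < x then 1 else 0)" for x
      unfolding card_eq_sum by (rule sum.inter_filter[OF assms(2)])
  qed (rule refl)
  finally show ?thesis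
    by (simp add: msgn_def)
qed

lemma inversions_eq_length_filter: "inversions xs =
  length (filter (\<lambda>(i, j). i < j \<and> xs ! j < xs ! i) (List.product [0..<length xs] [0..<length xs]))"
proof -
  let ?L = "filter (\<lambda>(i, j). i < j \<and> xs ! j < xs ! i) (List.product [0..<length xs] [0..<length xs])"
  have "{(i, j). i < j \<and> j < length xs \<and> xs ! j < xs ! i} = set ?L"
    by (auto simp: set_product)
  moreover have "distinct ?L"
    by (simp add: distinct_product)
  ultimately show ?thesis
    unfolding inversions_def by (simp only: distinct_card)
qed

lemmas form_eval = idx_eq basis_eval membership_def fadd_def fsub_def fscale_def msgn_eq_sum

section \<open>The Lie algebra g_{A,B,C} for diagonal A, B, C\<close>

definition weight :: "(nat \<Rightarrow> real) \<Rightarrow> (nat \<Rightarrow> real) \<Rightarrow> (nat \<Rightarrow> real) \<Rightarrow> nat \<Rightarrow> nat \<Rightarrow> real" where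
  "weight a b c x y = (if x = 7 then a (y - 2) else if x = 1 then b (y - 2) else if x = 2 then c (y - 2) else 0)"

text \<open>The value of the 1-form f on [e_i, e_j].\<close>

definition bracket_pairing ::
    "(nat \<Rightarrow> real) \<Rightarrow> (nat \<Rightarrow> real) \<Rightarrow> (nat \<Rightarrow> real) \<Rightarrow> nat \<Rightarrow> nat \<Rightarrow> (nat \<Rightarrow> real) \<Rightarrow> real" where
  "bracket_pairing a b c i j f =
     (if i \<in> {7, 1, 2} \<and> j \<in> {3..6} then weight a b c i j * f j
      else if j \<in> {7, 1, 2} \<and> i \<in> {3..6} then - (weight a b c j i * f i)
      else 0)"

lemma admat_diagm:
  "x \<in> {7, 1, 2} \<Longrightarrow> admat (diagm a) (diagm b) (diagm c) x (m - 2) (j - 2) =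
     (if m - 2 = j - 2 then weight a b c x j else 0)"
  by (auto simp: admat_def diagm_def weight_def)

lemma gbr_diagm:
  "gbr (diagm a) (diagm b) (diagm c) i j m =
     (if i \<in> {7, 1, 2} \<and> j \<in> {3..6} then (if m = j then weight a b c i j else 0)
      else if j \<in> {7, 1, 2} \<and> i \<in> {3..6} then (if m = i then - weight a b c j i else 0)
      else 0)"
proof -
  have shift: "m \<in> {3..6} \<Longrightarrow> k \<in> {3..6} \<Longrightarrow> m - 2 = k - 2 \<longleftrightarrow> m = k" for k :: nat
    by auto
  show ?thesis
    unfolding gbr_def by (auto simp: admat_diagm shift)
qed
lemma sum_gbr_diagm:
  "(\<Sum>m\<in>idx. gbr (diagm a) (diagm b) (diagm c) i j m * f m) = bracket_pairing a b c i j f"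
  by (auto simp: gbr_diagm bracket_pairing_def if_distrib[of "\<lambda>x. x * _"] sum.delta idx_def
      cong: if_cong)

lemma dext_diagm_eval:
  "dext (gbr (diagm a) (diagm b) (diagm c)) \<alpha> K =
    (if K \<subseteq> idx then
      (let ks = sorted_list_of_set K; p = length ks in
        \<Sum>i\<leftarrow>[0..<p]. \<Sum>j\<leftarrow>[0..<p]. if i < j then
          (-1) ^ (i + j) * bracket_pairing a b c (ks ! i) (ks ! j)
            (\<lambda>m. ev \<alpha> (m # [ks ! l. l \<leftarrow> [0..<p], l \<noteq> i \<and> l \<noteq> j]))
        else 0)
     else 0)"
  unfolding dext_def Let_def sum_gbr_diagm
  by (simp add: interv_sum_list_conv_sum_set_nat atLeast0LessThan)

lemmas dext_eval = dext_diagm_eval bracket_pairing_def weight_def ev_def inversions_eq_length_filter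
  upt_conv_Cons insert_Diff_if hstar_def

lemma phi_eq_basis:
  "phi = basis {1, 2, 7} +\<^sub>f basis {3, 4, 7} +\<^sub>f basis {5, 6, 7} +\<^sub>f basis {1, 3, 5}
     -\<^sub>f basis {1, 4, 6} -\<^sub>f basis {2, 3, 6} -\<^sub>f basis {2, 4, 5}"
  unfolding phi_def
  apply (simp add: wedge_simps idx_eq)
  apply (rule form_eq_by_subsets)
    apply (auto intro!: supported_intros simp: idx_eq)[2]
  apply (simp only: list.set ball_simps subseqs.simps Let_def list.map append.simps)
  apply (intro conjI)
  apply (simp_all add: form_eval)
  done

lemma supported_phi: "supported phi"
  unfolding phi_eq_basis by (auto intro!: supported_intros simp: idx_eq)

lemma dext_phi:
  "dext (gbr (diagm a) (diagm b) (diagm c)) phi =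
     (c 1 + c 3) *\<^sub>f basis {1, 2, 3, 5} +\<^sub>f (b 1 + b 4) *\<^sub>f basis {1, 2, 3, 6}
     +\<^sub>f (b 2 + b 3) *\<^sub>f basis {1, 2, 4, 5} +\<^sub>f (- c 2 - c 4) *\<^sub>f basis {1, 2, 4, 6}
     +\<^sub>f (- b 1 - b 2) *\<^sub>f basis {1, 3, 4, 7} +\<^sub>f (a 1 + a 3) *\<^sub>f basis {1, 3, 5, 7}
     +\<^sub>f (- a 2 - a 4) *\<^sub>f basis {1, 4, 6, 7} +\<^sub>f (- b 3 - b 4) *\<^sub>f basis {1, 5, 6, 7}
     +\<^sub>f (- c 1 - c 2) *\<^sub>f basis {2, 3, 4, 7} +\<^sub>f (- a 1 - a 4) *\<^sub>f basis {2, 3, 6, 7}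
     +\<^sub>f (- a 2 - a 3) *\<^sub>f basis {2, 4, 5, 7} +\<^sub>f (- c 3 - c 4) *\<^sub>f basis {2, 5, 6, 7}"
  unfolding phi_eq_basis
  apply (rule form_eq_by_subsets)
    apply (auto intro!: supported_intros simp: idx_eq)[2]
  apply (simp only: list.set ball_simps subseqs.simps Let_def list.map append.simps)
  apply (intro conjI)
  apply (simp_all add: form_eval dext_eval)
  done

lemma dext_psi:
  "dext (gbr (diagm a) (diagm b) (diagm c)) (hstar phi) =
     (- a 1 - a 2) *\<^sub>f basis {1, 2, 3, 4, 7} +\<^sub>f (- b 1 - b 3) *\<^sub>f basis {1, 2, 3, 5, 7}
     +\<^sub>f (c 1 + c 4) *\<^sub>f basis {1, 2, 3, 6, 7} +\<^sub>f (c 2 + c 3) *\<^sub>f basis {1, 2, 4, 5, 7}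
     +\<^sub>f (b 2 + b 4) *\<^sub>f basis {1, 2, 4, 6, 7} +\<^sub>f (- a 3 - a 4) *\<^sub>f basis {1, 2, 5, 6, 7}
     +\<^sub>f (- b 1 - b 2 - b 3 - b 4) *\<^sub>f basis {1, 3, 4, 5, 6}
     +\<^sub>f (- c 1 - c 2 - c 3 - c 4) *\<^sub>f basis {2, 3, 4, 5, 6}
     +\<^sub>f (- a 1 - a 2 - a 3 - a 4) *\<^sub>f basis {3, 4, 5, 6, 7}"
  unfolding phi_eq_basis
  apply (rule form_eq_by_subsets)
    apply (auto intro!: supported_intros simp: idx_eq)[2]
  apply (simp only: list.set ball_simps subseqs.simps Let_def list.map append.simps)
  apply (intro conjI)
  apply (simp_all add: form_eval dext_eval)
  done

lemma wedge_omega_expansion: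
  "x *\<^sub>f (omega7 \<and>\<^sub>f ef 7) +\<^sub>f y *\<^sub>f (omega1 \<and>\<^sub>f ef 1) +\<^sub>f z *\<^sub>f (omega2 \<and>\<^sub>f ef 2) =
     x *\<^sub>f basis {3, 4, 7} +\<^sub>f x *\<^sub>f basis {5, 6, 7} +\<^sub>f y *\<^sub>f basis {1, 3, 5}
     -\<^sub>f y *\<^sub>f basis {1, 4, 6} -\<^sub>f z *\<^sub>f basis {2, 3, 6} -\<^sub>f z *\<^sub>f basis {2, 4, 5}"
  unfolding omega7_def omega1_def omega2_def
  apply (simp add: wedge_simps idx_eq)
  apply (rule form_eq_by_subsets)
    apply (auto intro!: supported_intros simp: idx_eq)[2]
  apply (simp only: list.set ball_simps subseqs.simps Let_def list.map append.simps)
  apply (intro conjI)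
  apply (simp_all add: form_eval)
  done

lemma hodge_lap_phi:
  assumes "a 1 + a 2 + a 3 + a 4 = 0" "b 1 + b 2 + b 3 + b 4 = 0" "c 1 + c 2 + c 3 + c 4 = 0"
  shows "hodge_lap (gbr (diagm a) (diagm b) (diagm c)) phi =
           ((a 1 + a 2)^2 + (b 1 + b 2)^2 + (c 1 + c 2)^2) *\<^sub>f (omega7 \<and>\<^sub>f ef 7)
        +\<^sub>f ((a 1 + a 3)^2 + (b 1 + b 3)^2 + (c 1 + c 3)^2) *\<^sub>f (omega1 \<and>\<^sub>f ef 1)
        +\<^sub>f ((a 1 + a 4)^2 + (b 1 + b 4)^2 + (c 1 + c 4)^2) *\<^sub>f (omega2 \<and>\<^sub>f ef 2)"
proof -
  have a4: "a 4 = - a 1 - a 2 - a 3" and b4: "b 4 = - b 1 - b 2 - b 3"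
    and c4: "c 4 = - c 1 - c 2 - c 3"
    using assms by linarith+
  show ?thesis
    unfolding wedge_omega_expansion
    apply (rule form_eq_by_subsets)
      apply (auto intro!: supported_intros simp: idx_eq)[2]
    apply (simp only: list.set ball_simps subseqs.simps Let_def list.map append.simps)
    apply (intro conjI)
    apply (simp_all only: hodge_lap_def codiff_def dext_phi dext_psi)
    apply (simp_all add: form_eval dext_eval)
    apply (simp_all add: a4 b4 c4 power2_eq_square algebra_simps)
    done
qed

lemma hstar_omega_wedges:
  "hstar (x *\<^sub>f (omega7 \<and>\<^sub>f ef 7) +\<^sub>f y *\<^sub>f (omega1 \<and>\<^sub>f ef 1) +\<^sub>f z *\<^sub>f (omega2 \<and>\<^sub>f ef 2)) =
     x *\<^sub>f (omega7 \<and>\<^sub>f ef 1 \<and>\<^sub>f ef 2) +\<^sub>f y *\<^sub>f (omega1 \<and>\<^sub>f ef 2 \<and>\<^sub>f ef 7)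
     -\<^sub>f z *\<^sub>f (omega2 \<and>\<^sub>f ef 1 \<and>\<^sub>f ef 7)"
  unfolding wedge_omega_expansion
  unfolding omega7_def omega1_def omega2_def
  apply (simp add: wedge_simps idx_eq)
  apply (rule form_eq_by_subsets)
    apply (auto intro!: supported_intros simp: idx_eq)[2]
  apply (simp only: list.set ball_simps subseqs.simps Let_def list.map append.simps)
  apply (intro conjI)
  apply (simp_all add: form_eval hstar_def insert_Diff_if)
  done

theorem corollary4p11:
  fixes a b c :: "nat \<Rightarrow> real"
  assumes "a 1 + a 2 + a 3 + a 4 = 0"
      and "b 1 + b 2 + b 3 + b 4 = 0"
      and "c 1 + c 2 + c 3 + c 4 = 0"
  shows "(hodge_lap (gbr (diagm a) (diagm b) (diagm c)) phi =
           (((a 1 + a 2)^2 + (b 1 + b 2)^2 + (c 1 + c 2)^2) *\<^sub>f (omega7 \<and>\<^sub>f ef 7))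
        +\<^sub>f (((a 1 + a 3)^2 + (b 1 + b 3)^2 + (c 1 + c 3)^2) *\<^sub>f (omega1 \<and>\<^sub>f ef 1))
        +\<^sub>f (((a 1 + a 4)^2 + (b 1 + b 4)^2 + (c 1 + c 4)^2) *\<^sub>f (omega2 \<and>\<^sub>f ef 2))) \<and>
         (hodge_lap (gbr (diagm a) (diagm b) (diagm c)) (hstar phi) =
           (((a 1 + a 2)^2 + (b 1 + b 2)^2 + (c 1 + c 2)^2) *\<^sub>f (omega7 \<and>\<^sub>f ef 1 \<and>\<^sub>f ef 2))
        +\<^sub>f (((a 1 + a 3)^2 + (b 1 + b 3)^2 + (c 1 + c 3)^2) *\<^sub>f (omega1 \<and>\<^sub>f ef 2 \<and>\<^sub>f ef 7))
        -\<^sub>f (((a 1 + a 4)^2 + (b 1 + b 4)^2 + (c 1 + c 4)^2) *\<^sub>f (omega2 \<and>\<^sub>f ef 1 \<and>\<^sub>f ef 7)))"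
  unfolding hodge_lap_hstar[OF supported_phi] hodge_lap_phi[OF assms] hstar_omega_wedges
  by (intro conjI refl)
end
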